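(* Let $\Gamma$ be a two-stack automaton and let $\gamma=\gamma_1\cdots\gamma_n$ be a path in $\Gamma$. Then $\gamma$ is balanced if and only if there exists an involution $\pi_\gamma\in S_n$ such that: (1) $\rho(\gamma_i)=\varepsilon$ for all $i$ with $\pi_\gamma(i)=i$; (2) $\rho(\gamma_i)\in X\cup Y$ and $\rho(\gamma_{\pi_\gamma(i)})=\rho(\gamma_i)^{-1}$ for all $i$ with $\pi_\gamma(i)>i$; (3) there are no $i,j$ with $\rho(\gamma_i)\sim\rho(\gamma_j)$ and $i<j<\pi_\gamma(i)<\pi_\gamma(j)$. Moreover, for each balanced $\gamma$ such an involution $\pi_\gamma$ is unique.
   Context: Let $X=\{x_i: i\in\mathbb Z\}$, $X^{-1}=\{x_i^{-1}: i\in\mathbb Z\}$, and similarly $Y=\{y_i\}$, $Y^{-1}=\{y_i^{-1}\}$ be formal labels, and $\varepsilon$ a further label. Write $w_1\sim w_2$ if $w_1,w_2\in X\cup X^{-1}$ or $w_1,w_2\in Y\cup Y^{-1}$. A two-stack automaton is a finite directed graph $\Gamma$ with vertices $v_1,\dots,v_m$, each vertex $v$ labelled by $\rho(v)\in X\cup X^{-1}\cup Y\cup Y^{-1}\cup\{\varepsilon\}$, such that $\rho(v_1)=\rho(v_2)=\varepsilon$ and there is no edge $v_i\to v_j$ with $\rho(v_i)\sim\rho(v_j)$. A path $\gamma=\gamma_1\cdots\gamma_n$ is a sequence of vertices with $\gamma_t\to\gamma_{t+1}$ edges; its length is $n$ (the number of vertices). Traversing $\gamma$, keep two words $w_X\in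 X^*$, $w_Y\in Y^*$, initially empty; on entering a vertex with label $x_i$ append $x_i$ to $w_X$, with label $x_i^{-1}$ remove $x_i$ from the end of $w_X$ (similarly for $y_i$, $y_i^{-1}$ and $w_Y$), and with label $\varepsilon$ do nothing. The path is balanced if every step of this process is well defined (each removal removes the indicated letter from the end of the corresponding word) and both words are empty at the end. *)

theory Defs
  imports Main "HOL-Combinatorics.Permutations"
begin

datatype label = X int | Xinv int | Y int | Yinv int | Eps

definition similar :: "label \<Rightarrow> label \<Rightarrow> bool" (infix "\<sim>\<^sub>l" 50) where
  "a \<sim>\<^sub>l b \<longleftrightarrow>
     ((\<exists>i. a = X i \<or> a = Xinv i) \<and> (\<exists>j. b = X j \<or> b = Xinv j)) \<or>
     ((\<exists>i. a = Y i \<or> a = Yinv i) \<and> (\<exists>j. b = Y j \<or> b = Yinv j))"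

fun is_pos :: "label \<Rightarrow> bool" where
  "is_pos (X _) = True" | "is_pos (Y _) = True" | "is_pos _ = False"

fun linv :: "label \<Rightarrow> label" where
  "linv (X i) = Xinv i" | "linv (Xinv i) = X i" |
  "linv (Y i) = Yinv i" | "linv (Yinv i) = Y i" | "linv Eps = Eps"

definition two_stack_automaton ::
  "'v set \<Rightarrow> ('v \<times> 'v) set \<Rightarrow> ('v \<Rightarrow> label) \<Rightarrow> 'v \<Rightarrow> 'v \<Rightarrow> bool" where
  "two_stack_automaton V E rho v1 v2 \<longleftrightarrow>
     finite V \<and> E \<subseteq> V \<times> V \<and> v1 \<in> V \<and> v2 \<in> V \<and> v1 \<noteq> v2 \<and>
     rho v1 = Eps \<and> rho v2 = Eps \<and>
     (\<forall>(a, b) \<in> E. \<not> (rho a \<sim>\<^sub>l rho b))"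

definition is_path :: "'v set \<Rightarrow> ('v \<times> 'v) set \<Rightarrow> 'v list \<Rightarrow> bool" where
  "is_path V E \<gamma> \<longleftrightarrow> set \<gamma> \<subseteq> V \<and> (\<forall>t. Suc t < length \<gamma> \<longrightarrow> (\<gamma> ! t, \<gamma> ! Suc t) \<in> E)"

text \<open>Stack words are lists of indices; the last element of the list is the end of the word.
  None means that an ill-defined removal occurred.\<close>
fun stack_step :: "(int list \<times> int list) option \<Rightarrow> label \<Rightarrow> (int list \<times> int list) option" where
  "stack_step None _ = None"
| "stack_step (Some (wx, wy)) (X i) = Some (wx @ [i], wy)"
| "stack_step (Some (wx, wy)) (Y i) = Some (wx, wy @ [i])"
| "stack_step (Some (wx, wy)) (Xinv i) =
     (if wx \<noteq> [] \<and> last wx = i then Some (butlast wx, wy) else None)"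
| "stack_step (Some (wx, wy)) (Yinv i) =
     (if wy \<noteq> [] \<and> last wy = i then Some (wx, butlast wy) else None)"
| "stack_step (Some s) Eps = Some s"

definition balanced :: "('v \<Rightarrow> label) \<Rightarrow> 'v list \<Rightarrow> bool" where
  "balanced rho \<gamma> \<longleftrightarrow> foldl stack_step (Some ([], [])) (map rho \<gamma>) = Some ([], [])"

text \<open>Positions are 0-based: position i of the path is \<gamma> ! i, i < length \<gamma>.\<close>
definition good_involution :: "('v \<Rightarrow> label) \<Rightarrow> 'v list \<Rightarrow> (nat \<Rightarrow> nat) \<Rightarrow> bool" where
  "good_involution rho \<gamma> p \<longleftrightarrow>
     (let n = length \<gamma> in
       p permutes {..<n} \<and> (\<forall>i<n. p (p i) = i) \<and>
       (\<forall>i<n. p i = i \<longrightarrow> rho (\<gamma> ! i) = Eps) \<and>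
       (\<forall>i<n. p i > i \<longrightarrow> is_pos (rho (\<gamma> ! i)) \<and> rho (\<gamma> ! p i) = linv (rho (\<gamma> ! i))) \<and>
       \<not> (\<exists>i j. i < n \<and> j < n \<and> rho (\<gamma> ! i) \<sim>\<^sub>l rho (\<gamma> ! j) \<and>
                i < j \<and> j < p i \<and> p i < p j))"

end

theory Submission
  imports Defs
begin

text \<open>
  While the stack automaton runs, record the positions whose letters are on the stacks. Each pop
  matches the current position with the topmost recorded one; this builds a matching in which the
  arcs of each stack are nested and no letter still on a stack lies below an arc, and the stacks
  end empty exactly when no push stays unmatched. Conversely, for any such matching the positions
  on a stack just before time t are those pushed earlier and matched at or after t, or never;
  nestedness makes each pop take the top of this list. So every such matching replays the run,
  which gives both the characterisation and uniqueness.
\<close>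

fun stack_of :: "label \<Rightarrow> nat" where
  "stack_of (X _) = 1" | "stack_of (Xinv _) = 1" | "stack_of (Y _) = 2" | "stack_of (Yinv _) = 2"
| "stack_of Eps = 0"

fun letter_of :: "label \<Rightarrow> int" where
  "letter_of (X i) = i" | "letter_of (Xinv i) = i" | "letter_of (Y i) = i" | "letter_of (Yinv i) = i"
| "letter_of Eps = 0"

lemma similar_iff_stack_of: "a \<sim>\<^sub>l b \<longleftrightarrow> stack_of a = stack_of b \<and> stack_of a \<noteq> 0"
  by (cases a; cases b) (auto simp: similar_def)

lemma stack_of_eq_0_iff [simp]: "stack_of a = 0 \<longleftrightarrow> a = Eps"
  by (cases a) auto

lemma not_Eps_iff_stack_of: "a \<noteq> Eps \<longleftrightarrow> stack_of a = 1 \<or> stack_of a = 2"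
  by (cases a) auto

lemma stack_of_linv [simp]: "stack_of (linv a) = stack_of a"
  by (cases a) auto

lemma letter_of_linv [simp]: "letter_of (linv a) = letter_of a"
  by (cases a) auto

lemma is_pos_linv: "a \<noteq> Eps \<Longrightarrow> is_pos (linv a) \<longleftrightarrow> \<not> is_pos a"
  by (cases a) auto

lemma linv_eq_Eps_iff [simp]: "linv a = Eps \<longleftrightarrow> a = Eps"
  by (cases a) auto

lemma is_pos_not_Eps: "is_pos a \<Longrightarrow> a \<noteq> Eps"
  by (cases a) auto

lemma eq_linvI:
  "\<lbrakk>stack_of b = stack_of a; letter_of b = letter_of a; is_pos a; \<not> is_pos b; b \<noteq> Eps\<rbrakk>
   \<Longrightarrow> b = linv a"
  by (cases a; cases b) auto

lemma stack_step_Some: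
  fixes w :: "nat \<Rightarrow> int list"
  shows "stack_step (Some (w 1, w 2)) a =
   (if a = Eps then Some (w 1, w 2)
    else if is_pos a then
      (let w' = w(stack_of a := w (stack_of a) @ [letter_of a]) in Some (w' 1, w' 2))
    else if w (stack_of a) \<noteq> [] \<and> last (w (stack_of a)) = letter_of a then
      (let w' = w(stack_of a := butlast (w (stack_of a))) in Some (w' 1, w' 2))
    else None)"
  by (cases a) auto

lemma filter_upt_last:
  assumes "P m" "m < n" "\<And>k. m < k \<Longrightarrow> k < n \<Longrightarrow> \<not> P k"
  shows "filter P [0..<n] = filter (\<lambda>k. P k \<and> k \<noteq> m) [0..<n] @ [m]"
proof -
  have split: "[0..<n] = [0..<m] @ m # [Suc m..<n]"
    using assms(2) upt_add_eq_append[of 0 m "n - m"] upt_conv_Cons[of m n] by simp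
  have "filter P [Suc m..<n] = []" "filter (\<lambda>k. P k \<and> k \<noteq> m) [Suc m..<n] = []"
    using assms(3) by (auto simp: filter_empty_conv)
  moreover have "filter (\<lambda>k. P k \<and> k \<noteq> m) [0..<m] = filter P [0..<m]"
    by (rule filter_cong) auto
  ultimately show ?thesis
    unfolding split using assms(1) by simp
qed

lemma involution_permutes:
  assumes "\<And>x. x \<notin> S \<Longrightarrow> p x = x" "\<And>x. x \<in> S \<Longrightarrow> p x \<in> S" "\<And>x. x \<in> S \<Longrightarrow> p (p x) = x"
  shows "p permutes S"
  using assms by (intro bij_imp_permutes bij_betw_byWitness[where f' = p]) auto

lemma sorted_le_last: "sorted xs \<Longrightarrow> x \<in> set xs \<Longrightarrow> x \<le> last xs"
  by (induction xs) (auto simp: last_in_set)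

text \<open>
  A matching of a prefix of the input: positive fixed points are pushes whose letters are still
  on a stack. The last clause says that the arcs of one stack are nested and that no pending push
  lies below an arc; without pending pushes it is equivalent to the non-crossing condition.
\<close>

definition stack_matching :: "label list \<Rightarrow> (nat \<Rightarrow> nat) \<Rightarrow> bool" where
  "stack_matching ls p \<longleftrightarrow>
     (\<forall>i. length ls \<le> i \<longrightarrow> p i = i) \<and>
     (\<forall>i<length ls. p i < length ls \<and> p (p i) = i) \<and>
     (\<forall>i<length ls. p i = i \<longrightarrow> ls ! i = Eps \<or> is_pos (ls ! i)) \<and>
     (\<forall>i<length ls. i < p i \<longrightarrow> is_pos (ls ! i) \<and> ls ! p i = linv (ls ! i)) \<and>
     (\<forall>i<length ls. \<forall>j<length ls. ls ! i \<sim>\<^sub>l ls ! j \<longrightarrow> i < j \<longrightarrow> j < p i \<longrightarrow>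
        p j \<noteq> j \<and> i < p j \<and> p j < p i)"

lemma stack_matchingI:
  assumes "\<And>i. length ls \<le> i \<Longrightarrow> p i = i"
    and "\<And>i. i < length ls \<Longrightarrow> p i < length ls" "\<And>i. i < length ls \<Longrightarrow> p (p i) = i"
    and "\<And>i. i < length ls \<Longrightarrow> p i = i \<Longrightarrow> ls ! i = Eps \<or> is_pos (ls ! i)"
    and "\<And>i. i < length ls \<Longrightarrow> i < p i \<Longrightarrow> is_pos (ls ! i) \<and> ls ! p i = linv (ls ! i)"
    and "\<And>i j. \<lbrakk>i < length ls; j < length ls; ls ! i \<sim>\<^sub>l ls ! j; i < j; j < p i\<rbrakk>
      \<Longrightarrow> p j \<noteq> j \<and> i < p j \<and> p j < p i"
  shows "stack_matching ls p"
  using assms unfolding stack_matching_def by blast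

lemma stack_matching_outside: "stack_matching ls p \<Longrightarrow> length ls \<le> i \<Longrightarrow> p i = i"
  by (simp add: stack_matching_def)

lemma stack_matching_less: "stack_matching ls p \<Longrightarrow> i < length ls \<Longrightarrow> p i < length ls"
  by (simp add: stack_matching_def)

lemma stack_matching_involution: "stack_matching ls p \<Longrightarrow> i < length ls \<Longrightarrow> p (p i) = i"
  by (simp add: stack_matching_def)

lemma stack_matching_nested:
  "\<lbrakk>stack_matching ls p; i < length ls; j < length ls; ls ! i \<sim>\<^sub>l ls ! j; i < j; j < p i\<rbrakk>
   \<Longrightarrow> p j \<noteq> j \<and> i < p j \<and> p j < p i"
  unfolding stack_matching_def by blast

lemma stack_matching_cases:
  assumes "stack_matching ls p" "i < length ls"
  obtains "p i = i" "ls ! i = Eps \<or> is_pos (ls ! i)"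
  | "i < p i" "is_pos (ls ! i)" "ls ! p i = linv (ls ! i)"
  | "p i < i" "is_pos (ls ! p i)" "ls ! i = linv (ls ! p i)"
proof -
  have "p i < length ls" "p (p i) = i"
    using assms by (simp_all add: stack_matching_def)
  then show thesis
    using assms that unfolding stack_matching_def by (metis linorder_neqE_nat)
qed

lemma stack_matching_same_stack:
  assumes "stack_matching ls p" "i < length ls"
  shows "stack_of (ls ! p i) = stack_of (ls ! i)"
  by (rule stack_matching_cases[OF assms]) (metis stack_of_linv)+

lemma stack_matching_closing:
  assumes "stack_matching ls p" "i < length ls" "ls ! i \<noteq> Eps" "\<not> is_pos (ls ! i)"
  shows "p i < i" "ls ! i = linv (ls ! p i)"
  using stack_matching_cases[OF assms(1,2)] assms(3,4) by blast+

text \<open>The positions whose letters are on stack \<open>c\<close> just before position \<open>t\<close> is read.\<close>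

lemma stack_matching_pending_below_arcs:
  assumes M: "stack_matching ls p" and "p s = s" "s < j" "j < length ls" "p j \<noteq> j"
    and "ls ! s \<sim>\<^sub>l ls ! j"
  shows "s < p j"
proof (rule ccontr)
  assume "\<not> s < p j"
  moreover have "p j \<noteq> s"
    using assms(2,3) stack_matching_involution[OF M assms(4)] by auto
  ultimately have "p j < s"
    by simp
  moreover have "ls ! p j \<sim>\<^sub>l ls ! s"
    using assms(6) stack_matching_same_stack[OF M assms(4)] by (auto simp: similar_iff_stack_of)
  ultimately show False
    using stack_matching_nested[OF M, of "p j" s] assms stack_matching_less[OF M]
      stack_matching_involution[OF M] by auto
qed

definition open_positions :: "label list \<Rightarrow> (nat \<Rightarrow> nat) \<Rightarrow> nat \<Rightarrow> nat \<Rightarrow> nat list" where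
  "open_positions ls p c t = filter (\<lambda>s. stack_of (ls ! s) = c \<and> (p s = s \<or> t \<le> p s)) [0..<t]"

lemma open_positions_Suc:
  assumes M: "stack_matching ls p" and t: "t < length ls"
  shows "open_positions ls p c (Suc t) =
    filter (\<lambda>s. stack_of (ls ! s) = c \<and> (p s = s \<or> t \<le> p s) \<and> s \<noteq> p t) [0..<t]
    @ (if stack_of (ls ! t) = c \<and> t \<le> p t then [t] else [])"
proof -
  have "(p s = s \<or> Suc t \<le> p s) \<longleftrightarrow> (p s = s \<or> t \<le> p s) \<and> s \<noteq> p t" if "s < t" for s
  proof -
    have "p s = t \<longleftrightarrow> s = p t"
      using that t stack_matching_involution[OF M] by (metis order.strict_trans)
    then show ?thesis
      using that by auto
  qed
  then have "filter (\<lambda>s. stack_of (ls ! s) = c \<and> (p s = s \<or> Suc t \<le> p s)) [0..<t] =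
      filter (\<lambda>s. stack_of (ls ! s) = c \<and> (p s = s \<or> t \<le> p s) \<and> s \<noteq> p t) [0..<t]"
    by (intro filter_cong) auto
  moreover have "(p t = t \<or> Suc t \<le> p t) \<longleftrightarrow> t \<le> p t"
    by auto
  ultimately show ?thesis
    unfolding open_positions_def by simp
qed

lemma open_positions_no_pop:
  assumes M: "stack_matching ls p" and t: "t < length ls"
    and no_pop: "\<not> (ls ! t \<noteq> Eps \<and> \<not> is_pos (ls ! t) \<and> stack_of (ls ! t) = c)"
  shows "open_positions ls p c (Suc t) =
    open_positions ls p c t @ (if stack_of (ls ! t) = c then [t] else [])"
proof -
  note same_stack = stack_matching_same_stack[OF M t]
  have "t \<le> p t" if "stack_of (ls ! t) = c"
    by (rule stack_matching_cases[OF M t]) (use no_pop that is_pos_linv is_pos_not_Eps in auto)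
  then have "filter (\<lambda>s. stack_of (ls ! s) = c \<and> (p s = s \<or> t \<le> p s) \<and> s \<noteq> p t) [0..<t] =
      open_positions ls p c t"
    unfolding open_positions_def using same_stack by (intro filter_cong) auto
  then show ?thesis
    unfolding open_positions_Suc[OF M t] using \<open>stack_of (ls ! t) = c \<Longrightarrow> t \<le> p t\<close> by simp
qed

lemma open_positions_pop:
  assumes M: "stack_matching ls p" and t: "t < length ls" and "ls ! t \<noteq> Eps" "\<not> is_pos (ls ! t)"
  shows "open_positions ls p (stack_of (ls ! t)) t =
    open_positions ls p (stack_of (ls ! t)) (Suc t) @ [p t]"
proof -
  let ?c = "stack_of (ls ! t)"
  let ?P = "\<lambda>s. stack_of (ls ! s) = ?c \<and> (p s = s \<or> t \<le> p s)"
  have pt: "p t < t" "ls ! t = linv (ls ! p t)"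
    using stack_matching_closing[OF M t assms(3,4)] by auto
  have ppt: "p (p t) = t"
    using stack_matching_involution[OF M t] .
  have "\<not> ?P s" if "p t < s" "s < t" for s
  proof
    assume "?P s"
    then have "ls ! p t \<sim>\<^sub>l ls ! s"
      using pt assms(3) by (auto simp: similar_iff_stack_of)
    then have "p s \<noteq> s \<and> p s < t"
      using stack_matching_nested[OF M _ _ _ that(1)] that ppt t by auto
    with \<open>?P s\<close> show False
      by simp
  qed
  then have "filter ?P [0..<t] = filter (\<lambda>s. ?P s \<and> s \<noteq> p t) [0..<t] @ [p t]"
    using pt ppt by (intro filter_upt_last) auto
  then show ?thesis
    using pt by (simp add: open_positions_Suc[OF M t] open_positions_def[of _ _ _ t])
qed

text \<open>The same list, computed by the run alone and hence independent of the matching.\<close>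

fun stack_positions :: "label list \<Rightarrow> nat \<Rightarrow> nat \<Rightarrow> nat list" where
  "stack_positions ls c 0 = []"
| "stack_positions ls c (Suc t) =
     (if stack_of (ls ! t) \<noteq> c then stack_positions ls c t
      else if is_pos (ls ! t) then stack_positions ls c t @ [t]
      else butlast (stack_positions ls c t))"

lemma open_positions_eq_stack_positions:
  assumes M: "stack_matching ls p" and c: "c \<noteq> 0"
  shows "t \<le> length ls \<Longrightarrow> open_positions ls p c t = stack_positions ls c t"
proof (induction t)
  case 0
  then show ?case
    by (simp add: open_positions_def)
next
  case (Suc t)
  then have t: "t < length ls"
    by simp
  show ?case
  proof (cases "ls ! t \<noteq> Eps \<and> \<not> is_pos (ls ! t) \<and> stack_of (ls ! t) = c")
    case True
    then show ?thesis
      using open_positions_pop[OF M t] Suc by auto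
  next
    case False
    then show ?thesis
      using open_positions_no_pop[OF M t, of c] Suc c by auto
  qed
qed

lemma stack_matching_pop_position:
  assumes "stack_matching ls p" "t < length ls" "ls ! t \<noteq> Eps" "\<not> is_pos (ls ! t)"
  shows "stack_positions ls (stack_of (ls ! t)) t \<noteq> []"
    "p t = last (stack_positions ls (stack_of (ls ! t)) t)"
proof -
  have "stack_positions ls (stack_of (ls ! t)) t =
      open_positions ls p (stack_of (ls ! t)) (Suc t) @ [p t]"
    using open_positions_eq_stack_positions[OF assms(1), of "stack_of (ls ! t)" t]
      open_positions_pop[OF assms] assms(2,3) by simp
  then show "stack_positions ls (stack_of (ls ! t)) t \<noteq> []"
    "p t = last (stack_positions ls (stack_of (ls ! t)) t)"
    by simp_all
qed

lemma foldl_stack_step_take: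
  assumes M: "stack_matching ls p"
  shows "t \<le> length ls \<Longrightarrow> foldl stack_step (Some ([], [])) (take t ls) =
    Some (map (\<lambda>s. letter_of (ls ! s)) (stack_positions ls 1 t),
          map (\<lambda>s. letter_of (ls ! s)) (stack_positions ls 2 t))"
proof (induction t)
  case 0
  then show ?case
    by simp
next
  case (Suc t)
  define w where "w c = map (\<lambda>s. letter_of (ls ! s)) (stack_positions ls c t)" for c
  have t: "t < length ls"
    using Suc by simp
  have step: "foldl stack_step (Some ([], [])) (take (Suc t) ls) = stack_step (Some (w 1, w 2)) (ls ! t)"
    using Suc t by (simp add: take_Suc_conv_app_nth w_def)
  consider "ls ! t = Eps" | "is_pos (ls ! t)" | "ls ! t \<noteq> Eps" "\<not> is_pos (ls ! t)"
    by blast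
  then show ?case
  proof cases
    case 1
    then show ?thesis
      unfolding step by (simp add: w_def)
  next
    case 2
    then have "stack_of (ls ! t) = 1 \<or> stack_of (ls ! t) = 2"
      using is_pos_not_Eps not_Eps_iff_stack_of by blast
    then show ?thesis
      unfolding step stack_step_Some using 2 is_pos_not_Eps by (auto simp: w_def)
  next
    case 3
    then have "stack_of (ls ! t) = 1 \<or> stack_of (ls ! t) = 2"
      using not_Eps_iff_stack_of by blast
    moreover have "w (stack_of (ls ! t)) \<noteq> [] \<and> last (w (stack_of (ls ! t))) = letter_of (ls ! t)"
    proof -
      have "letter_of (ls ! t) = letter_of (ls ! p t)"
        using stack_matching_closing(2)[OF M t 3] letter_of_linv by metis
      with stack_matching_pop_position[OF M t 3] show ?thesis
        by (simp add: w_def last_map)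
    qed
    ultimately show ?thesis
      unfolding step stack_step_Some using 3 by (auto simp: w_def map_butlast)
  qed
qed

definition unmatched :: "label list \<Rightarrow> (nat \<Rightarrow> nat) \<Rightarrow> nat \<Rightarrow> nat list" where
  "unmatched ls p c = filter (\<lambda>s. stack_of (ls ! s) = c \<and> p s = s) [0..<length ls]"

lemma stack_positions_length:
  assumes M: "stack_matching ls p" and "c \<noteq> 0"
  shows "stack_positions ls c (length ls) = unmatched ls p c"
proof -
  have "open_positions ls p c (length ls) = unmatched ls p c"
    unfolding open_positions_def unmatched_def
    by (intro filter_cong) (auto dest: stack_matching_less[OF M])
  then show ?thesis
    using open_positions_eq_stack_positions[OF assms] by simp
qed

theorem foldl_stack_step_stack_matching:
  assumes "stack_matching ls p"
  shows "foldl stack_step (Some ([], [])) ls =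
    Some (map (\<lambda>s. letter_of (ls ! s)) (unmatched ls p 1),
          map (\<lambda>s. letter_of (ls ! s)) (unmatched ls p 2))"
  using foldl_stack_step_take[OF assms, of "length ls"] stack_positions_length[OF assms] by simp

theorem stack_matching_unique:
  assumes P: "stack_matching ls p" and Q: "stack_matching ls q"
  shows "p = q"
proof
  fix x
  have closing: "p t = q t" if "t < length ls" "ls ! t \<noteq> Eps" "\<not> is_pos (ls ! t)" for t
    using stack_matching_pop_position(2)[OF P that] stack_matching_pop_position(2)[OF Q that] by simp
  have forward: "p' x = q' x"
    if P': "stack_matching ls p'" and Q': "stack_matching ls q'" and x: "x < length ls" "x < p' x"
      and closing': "\<And>t. t < length ls \<Longrightarrow> ls ! t \<noteq> Eps \<Longrightarrow> \<not> is_pos (ls ! t) \<Longrightarrow> p' t = q' t"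
    for p' q'
  proof -
    have u: "p' x < length ls" "ls ! p' x = linv (ls ! x)" "is_pos (ls ! x)"
      using stack_matching_less[OF P' x(1)] stack_matching_cases[OF P' x(1)] x(2) by auto
    then have "q' (p' x) = x"
      using closing'[of "p' x"] stack_matching_involution[OF P' x(1)] is_pos_linv is_pos_not_Eps
      by (metis linv_eq_Eps_iff)
    then show ?thesis
      using stack_matching_involution[OF Q' u(1)] by simp
  qed
  show "p x = q x"
  proof (cases "x < length ls")
    case False
    then show ?thesis
      using stack_matching_outside[OF P] stack_matching_outside[OF Q] by simp
  next
    case x: True
    consider "ls ! x \<noteq> Eps" "\<not> is_pos (ls ! x)" | "x < p x" | "x < q x" | "p x = x" "q x = x"
      using stack_matching_cases[OF P x] stack_matching_cases[OF Q x] is_pos_linv is_pos_not_Eps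
      by (metis linv_eq_Eps_iff)
    then show ?thesis
    proof cases
      case 1
      then show ?thesis
        using closing x by blast
    next
      case 2
      then show ?thesis
        using forward[OF P Q x] closing by blast
    next
      case 3
      then show ?thesis
        using forward[OF Q P x] closing by auto
    qed simp
  qed
qed

lemma stack_matching_snoc_push:
  assumes M: "stack_matching ls p" and l: "l = Eps \<or> is_pos l"
  shows "stack_matching (ls @ [l]) p"
proof -
  have "p (length ls) = length ls"
    using stack_matching_outside[OF M] by simp
  then show ?thesis
    using M l unfolding stack_matching_def
    by (auto simp: nth_append less_Suc_eq)
qed

lemma stack_matching_snoc_pop:
  assumes M: "stack_matching ls p" and s: "s < length ls" "p s = s" "is_pos (ls ! s)"
    and last: "\<And>s'. s < s' \<Longrightarrow> s' < length ls \<Longrightarrow> ls ! s' \<sim>\<^sub>l ls ! s \<Longrightarrow> p s' \<noteq> s'"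
  shows "stack_matching (ls @ [linv (ls ! s)]) (p(s := length ls, length ls := s))"
proof -
  let ?n = "length ls" and ?ls = "ls @ [linv (ls ! s)]" and ?p = "p(s := length ls, length ls := s)"
  have old: "?p i = p i" "p i < ?n" "p i \<noteq> s" if "i < ?n" "i \<noteq> s" for i
    using that s stack_matching_less[OF M] stack_matching_involution[OF M] by auto
  have nth_old: "?ls ! i = ls ! i" if "i < ?n" for i
    using that by (simp add: nth_append)
  have outside: "?p i = i" if "Suc ?n \<le> i" for i
    using that s(1) stack_matching_outside[OF M] by simp
  have involution: "?p i < Suc ?n \<and> ?p (?p i) = i" if "i < Suc ?n" for i
  proof (cases "i = s \<or> i = ?n")
    case False
    then have "i < ?n"
      using that by simp
    then show ?thesis
      using False old[OF \<open>i < ?n\<close>] stack_matching_involution[OF M \<open>i < ?n\<close>] by auto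
  qed (use s(1) in auto)
  have fixed: "?ls ! i = Eps \<or> is_pos (?ls ! i)" if "i < Suc ?n" "?p i = i" for i
  proof -
    have "i < ?n" "i \<noteq> s"
      using that s(1) by (auto split: if_splits)
    then show ?thesis
      using M that(2) old nth_old unfolding stack_matching_def by auto
  qed
  have forward: "is_pos (?ls ! i) \<and> ?ls ! ?p i = linv (?ls ! i)" if "i < Suc ?n" "i < ?p i" for i
  proof (cases "i = s")
    case False
    then have "i < ?n"
      using that s(1) by (auto split: if_splits)
    then show ?thesis
      using M that(2) old[OF _ False] nth_old False unfolding stack_matching_def by auto
  qed (use s nth_old in auto)
  have nested: "?p j \<noteq> j \<and> i < ?p j \<and> ?p j < ?p i"
    if "i < Suc ?n" "j < Suc ?n" "?ls ! i \<sim>\<^sub>l ?ls ! j" "i < j" "j < ?p i" for i j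
  proof (cases "i = s")
    case True
    then have j: "s < j" "j < ?n" "j \<noteq> s" "stack_of (ls ! j) = stack_of (ls ! s)" "ls ! s \<noteq> Eps"
      using that nth_old s(1) by (auto simp: similar_iff_stack_of nth_append split: if_splits)
    have "p j \<noteq> j"
      using last[of j] j by (metis similar_iff_stack_of stack_of_eq_0_iff)
    then have "s < p j"
      using stack_matching_pending_below_arcs[OF M s(2) j(1,2)] j by (auto simp: similar_iff_stack_of)
    then show ?thesis
      using True old[OF j(2,3)] \<open>p j \<noteq> j\<close> by simp
  next
    case False
    then have i: "i < ?n"
      using that s(1) by (auto split: if_splits)
    then have j: "j < ?n" "ls ! i \<sim>\<^sub>l ls ! j"
      using that old[OF i False] nth_old by simp_all
    moreover have "j \<noteq> s"
      using stack_matching_nested[OF M i j] that old[OF i False] s(2) by auto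
    ultimately show ?thesis
      using stack_matching_nested[OF M i j] that old[OF i False] old by auto
  qed
  show ?thesis
    using outside involution fixed forward nested by (intro stack_matchingI) simp_all
qed

theorem stack_matching_exists:
  "foldl stack_step (Some ([], [])) ls \<noteq> None \<Longrightarrow> \<exists>p. stack_matching ls p"
proof (induction ls rule: rev_induct)
  case Nil
  have "stack_matching [] id"
    by (simp add: stack_matching_def)
  then show ?case
    by blast
next
  case (snoc l ls)
  have "foldl stack_step (Some ([], [])) ls \<noteq> None"
    using snoc.prems by (metis foldl_Nil foldl_append foldl_Cons stack_step.simps(1))
  then obtain p where M: "stack_matching ls p"
    using snoc.IH by blast
  define w where "w c = map (\<lambda>s. letter_of (ls ! s)) (unmatched ls p c)" for c
  have step: "stack_step (Some (w 1, w 2)) l \<noteq> None"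
    using snoc.prems foldl_stack_step_stack_matching[OF M] by (simp add: w_def)
  show ?case
  proof (cases "l = Eps \<or> is_pos l")
    case True
    then show ?thesis
      using stack_matching_snoc_push[OF M] by blast
  next
    case False
    let ?c = "stack_of l"
    define s where "s = last (unmatched ls p ?c)"
    have top: "unmatched ls p ?c \<noteq> []" "letter_of (ls ! s) = letter_of l"
      using step False unfolding stack_step_Some by (auto simp: w_def s_def last_map split: if_splits)
    then have "s \<in> set (unmatched ls p ?c)"
      by (simp add: s_def)
    then have s: "s < length ls" "stack_of (ls ! s) = ?c" "p s = s"
      by (auto simp: unmatched_def)
    have "is_pos (ls ! s)"
      using M s False unfolding stack_matching_def by auto
    moreover have "l = linv (ls ! s)"
      using eq_linvI[of l "ls ! s"] s(2) top(2) \<open>is_pos (ls ! s)\<close> False by simp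
    moreover have "p s' \<noteq> s'" if "s < s'" "s' < length ls" "ls ! s' \<sim>\<^sub>l ls ! s" for s'
    proof
      assume "p s' = s'"
      then have "s' \<in> set (unmatched ls p ?c)"
        using that s(2) by (simp add: unmatched_def similar_iff_stack_of)
      moreover have "sorted (unmatched ls p ?c)"
        unfolding unmatched_def by (rule sorted_wrt_filter) simp
      ultimately show False
        using sorted_le_last that(1) s_def by fastforce
    qed
    ultimately show ?thesis
      using stack_matching_snoc_pop[OF M s(1,3)] by blast
  qed
qed

lemma unmatched_empty_iff:
  "unmatched ls p 1 = [] \<and> unmatched ls p 2 = [] \<longleftrightarrow> (\<forall>i<length ls. p i = i \<longrightarrow> ls ! i = Eps)"
proof -
  have "unmatched ls p c = [] \<longleftrightarrow> (\<forall>i<length ls. stack_of (ls ! i) = c \<longrightarrow> p i \<noteq> i)" for c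
    by (auto simp: unmatched_def filter_empty_conv)
  then show ?thesis
    using not_Eps_iff_stack_of by blast
qed

lemma good_involution_imp_stack_matching:
  assumes good: "good_involution rho \<gamma> p"
  shows "stack_matching (map rho \<gamma>) p"
proof -
  let ?ls = "map rho \<gamma>"
  have perm: "p permutes {..<length \<gamma>}"
    and fixed: "\<And>k. k < length \<gamma> \<Longrightarrow> p k = k \<Longrightarrow> rho (\<gamma> ! k) = Eps"
    and inv: "\<And>k. k < length \<gamma> \<Longrightarrow> p (p k) = k"
    and forward: "\<And>k. k < length \<gamma> \<Longrightarrow> k < p k \<Longrightarrow>
      is_pos (rho (\<gamma> ! k)) \<and> rho (\<gamma> ! p k) = linv (rho (\<gamma> ! k))"
    and crossing: "\<And>i j. \<lbrakk>i < length \<gamma>; j < length \<gamma>; ?ls ! i \<sim>\<^sub>l ?ls ! j; i < j; j < p i; p i < p j\<rbrakk>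
      \<Longrightarrow> False"
    using good unfolding good_involution_def Let_def by auto
  have less: "p k < length \<gamma>" if "k < length \<gamma>" for k
    using permutes_in_image[OF perm] that by simp
  have nested: "p j \<noteq> j \<and> i < p j \<and> p j < p i"
    if ij: "i < length \<gamma>" "j < length \<gamma>" "?ls ! i \<sim>\<^sub>l ?ls ! j" "i < j" "j < p i" for i j
  proof -
    have "p j \<noteq> j"
      using fixed ij by (auto simp: similar_iff_stack_of)
    moreover have "\<not> p i < p j"
      using crossing ij by blast
    moreover have "\<not> p j < i"
    proof
      assume "p j < i"
      then have "rho (\<gamma> ! j) = linv (rho (\<gamma> ! p j))"
        using forward[of "p j"] inv less ij by auto
      then have "?ls ! p j \<sim>\<^sub>l ?ls ! i"
        using ij less by (auto simp: similar_iff_stack_of)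
      then show False
        using crossing[of "p j" i] ij inv less \<open>p j < i\<close> by simp
    qed
    moreover have "p j \<noteq> i" "p j \<noteq> p i"
      using inv[OF ij(1)] inv[OF ij(2)] ij(4,5) by auto
    ultimately show ?thesis
      by auto
  qed
  show ?thesis
  proof (rule stack_matchingI)
    show "p i = i" if "length ?ls \<le> i" for i
      using that permutes_not_in[OF perm] by simp
    show "p i < length ?ls" "p (p i) = i" if "i < length ?ls" for i
      using that less inv by simp_all
    show "?ls ! i = Eps \<or> is_pos (?ls ! i)" if "i < length ?ls" "p i = i" for i
      using that fixed by simp
    show "is_pos (?ls ! i) \<and> ?ls ! p i = linv (?ls ! i)" if "i < length ?ls" "i < p i" for i
      using that forward less by simp
    show "p j \<noteq> j \<and> i < p j \<and> p j < p i"
      if "i < length ?ls" "j < length ?ls" "?ls ! i \<sim>\<^sub>l ?ls ! j" "i < j" "j < p i" for i j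
      using that nested by simp
  qed
qed

lemma stack_matching_imp_good_involution:
  assumes M: "stack_matching (map rho \<gamma>) p"
    and fixed: "\<forall>i<length \<gamma>. p i = i \<longrightarrow> rho (\<gamma> ! i) = Eps"
  shows "good_involution rho \<gamma> p"
proof -
  have "p permutes {..<length \<gamma>}"
    using stack_matching_outside[OF M] stack_matching_less[OF M] stack_matching_involution[OF M]
    by (intro involution_permutes) auto
  moreover have "is_pos (rho (\<gamma> ! i)) \<and> rho (\<gamma> ! p i) = linv (rho (\<gamma> ! i))"
    if "i < length \<gamma>" "i < p i" for i
    using M that stack_matching_less[OF M] unfolding stack_matching_def by auto
  moreover have "\<not> p i < p j"
    if "i < length \<gamma>" "j < length \<gamma>" "rho (\<gamma> ! i) \<sim>\<^sub>l rho (\<gamma> ! j)" "i < j" "j < p i" for i j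
    using stack_matching_nested[OF M, of i j] that by auto
  ultimately show ?thesis
    unfolding good_involution_def Let_def
    using fixed stack_matching_involution[OF M] by auto
qed

lemma good_involution_iff_stack_matching:
  "good_involution rho \<gamma> p \<longleftrightarrow>
     stack_matching (map rho \<gamma>) p \<and> unmatched (map rho \<gamma>) p 1 = [] \<and> unmatched (map rho \<gamma>) p 2 = []"
proof -
  have "good_involution rho \<gamma> p \<Longrightarrow> \<forall>i<length \<gamma>. p i = i \<longrightarrow> rho (\<gamma> ! i) = Eps"
    unfolding good_involution_def Let_def by auto
  then show ?thesis
    using good_involution_imp_stack_matching stack_matching_imp_good_involution
      unmatched_empty_iff[of "map rho \<gamma>" p] by auto
qed

theorem proposition2p2:
  fixes V :: "'v set" and E :: "('v \<times> 'v) set" and rho :: "'v \<Rightarrow> label"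
    and v1 v2 :: 'v and \<gamma> :: "'v list"
  assumes "two_stack_automaton V E rho v1 v2"
    and "is_path V E \<gamma>"
  shows "(balanced rho \<gamma> \<longleftrightarrow> (\<exists>p. good_involution rho \<gamma> p))
         \<and> (balanced rho \<gamma> \<longrightarrow> (\<exists>!p. good_involution rho \<gamma> p))"
proof -
  let ?ls = "map rho \<gamma>"
  note good_iff = good_involution_iff_stack_matching[of rho \<gamma>]
  have "balanced rho \<gamma> \<longleftrightarrow> (\<exists>p. good_involution rho \<gamma> p)"
  proof
    assume "balanced rho \<gamma>"
    then have run: "foldl stack_step (Some ([], [])) ?ls = Some ([], [])"
      by (simp add: balanced_def)
    then obtain p where "stack_matching ?ls p"
      using stack_matching_exists by fastforce
    with run show "\<exists>p. good_involution rho \<gamma> p"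
      using good_iff foldl_stack_step_stack_matching by fastforce
  next
    assume "\<exists>p. good_involution rho \<gamma> p"
    then show "balanced rho \<gamma>"
      using good_iff foldl_stack_step_stack_matching by (auto simp: balanced_def)
  qed
  moreover have "p = q" if "good_involution rho \<gamma> p" "good_involution rho \<gamma> q" for p q
    using that good_iff stack_matching_unique by blast
  ultimately show ?thesis
    by blast
qed

end
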